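(* Let $\mathcal H$ be a Hilbert space (real or complex), let $X$ be a measure space and let $1<q<\infty$, $q'=q/(q-1)$. Let $A:\mathcal H\to L^q(X)$ be a bounded linear operator, let $A^*: L^{q'}(X)\to\mathcal H$ be its adjoint and let $\alpha:= \|A\|=\|A^*\|$. Then: (a1) If $f\in\mathcal H$ satisfies $\|f\|_{\mathcal H}=1$ and $\|Af\|_q=\alpha$, then $g:=\|Af\|_q^{1-q} |Af|^{q-2}Af$ satisfies $\|g\|_{q'}=1$ and $\|A^* g\|_{\mathcal H}= \alpha$. (a2) If $(f_n)\subset\mathcal H$ satisfies $\|f_n\|_{\mathcal H}=1$ and $\|Af_n\|_q\to\alpha$, then $g_n:=\|Af_n\|_q^{1-q} |Af_n|^{q-2}Af_n$ satisfies $\|g_n\|_{q'}=1$ and $\|A^* g_n\|_{\mathcal H}\to \alpha$. If, in addition, $g_n\to g$ in $L^{q'}(X)$, then $f_n\to \|A^* g\|_{\mathcal H}^{-1} A^* g$ in $\mathcal H$. (b1) If $g\in L^{q'}(X)$ satisfies $\|g\|_{q'}=1$ and $\|A^*g\|_{\mathcal H} = \alpha$, then $f := \|A^* g\|_{\mathcal H}^{-1} A^* g$ satisfies $\|f\|_{\mathcal H}=1$ and $\|A f\|_q= \alpha$. (b2) If $(g_n)\subset L^{q'}(X)$ satisfies $\|g_n\|_{q'}=1$ and $\|A^*g_n\|_{\mathcal H} \to \alpha$, then $f_n := \|A^* g_n\|_{\mathcal H}^{-1} A^* g_n$ satisfies $\|f_n\|_{\mathcal H}=1$ and $\|A f_n\|_q\to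 \alpha$. If, in addition, $f_n\to f$ in $\mathcal H$, then $g_n\to \|Af\|_q^{1-q}|Af|^{q-2} Af$ in $L^{q'}(X)$.
   Context: $\|\cdot\|_p$ denotes the norm of $L^p(X)$. In the complex case $|Af|^{q-2}Af$ is understood pointwise with the complex value $Af$. *)

theory Defs
  imports "HOL-Analysis.Analysis"
begin

text \<open>The scalar type is real or complex (any real_inner normed field).\<close>

definition Lq_space :: "'a measure \<Rightarrow> real \<Rightarrow> ('a \<Rightarrow> 'k::{real_inner,real_normed_field}) set" where
  "Lq_space M q = {u. u \<in> borel_measurable M \<and> integrable M (\<lambda>x. norm (u x) powr q)}"

definition Lq_norm :: "'a measure \<Rightarrow> real \<Rightarrow> ('a \<Rightarrow> 'k::{real_inner,real_normed_field}) \<Rightarrow> real" where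
  "Lq_norm M q u = (\<integral>x. norm (u x) powr q \<partial>M) powr (1 / q)"

definition duality_map :: "'a measure \<Rightarrow> real \<Rightarrow> ('a \<Rightarrow> 'k::{real_inner,real_normed_field}) \<Rightarrow> 'a \<Rightarrow> 'k" where
  "duality_map M q u = (\<lambda>x. Lq_norm M q u powr (1 - q) *\<^sub>R (norm (u x) powr (q - 2) *\<^sub>R u x))"

definition op_norm_Lq :: "'a measure \<Rightarrow> real \<Rightarrow> ('h::real_normed_vector \<Rightarrow> 'a \<Rightarrow> 'k::{real_inner,real_normed_field}) \<Rightarrow> real" where
  "op_norm_Lq M q A = (SUP f\<in>{f. norm f \<le> 1}. Lq_norm M q (A f))"

end

theory Submission
  imports Defs
begin

(* Hoelder's inequality gives <f, A* g> = \<integral> <Af, g> \<le> \<parallel>Af\<parallel>_q \<parallel>g\<parallel>_q', with equality for g = J(Af),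
   where J u = \<parallel>u\<parallel>^(1-q) |u|^(q-2) u is the duality map. Sandwiching between these two estimates
   gives (a1), (b1) and the norm statements of (a2), (b2). The convergence in (a2) is Hilbert
   space geometry: unit vectors f_n with <f_n, y_n> \<rightarrow> \<parallel>y\<parallel> and y_n \<rightarrow> y converge to y / \<parallel>y\<parallel>.
   The convergence in (b2) is a quantitative equality case of Young's inequality: for every
   \<epsilon> > 0 there is C with
     |v - |h|^(q-2) h|^q' \<le> \<epsilon> (|v|^q' + |h|^q) + C (|h|^q / q + |v|^q' / q' - <h, v>),
   and integrating this with h = Af / \<alpha> and v = g_n bounds \<parallel>g_n - J(Af)\<parallel>^q' by
   2\<epsilon> + C (1 - \<integral> <Af, g_n> / \<alpha>). *)

section \<open>Elementary inequalities\<close>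

lemma conjugate_exponent:
  fixes q q' :: real
  assumes q: "1 < q" and q': "q' = q / (q - 1)"
  shows "1 < q'" "1 / q + 1 / q' = 1" "q = q' / (q' - 1)"
  using q by (simp_all add: q' field_simps)

lemma powr_tangent_le:
  fixes P a s :: real
  assumes P: "1 < P" and a: "0 \<le> a" and s: "0 \<le> s"
  shows "a powr (P - 1) * (s - a) \<le> s powr P / P - a powr P / P"
proof -
  define Q where "Q = P / (P - 1)"
  have Q: "1 < Q" "1 / P + 1 / Q = 1" "(P - 1) * Q = P"
    using P by (auto simp: Q_def field_simps)
  have "s * a powr (P - 1) \<le> s powr P / P + (a powr (P - 1)) powr Q / Q"
    using Youngs_inequality[OF P Q(1,2)] a s by simp
  also have "(a powr (P - 1)) powr Q = a powr P"
    using Q(3) by (simp add: powr_powr)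
  also have "a powr P / Q = a powr P - a powr P / P"
    using P by (simp add: Q_def field_simps)
  finally show ?thesis
    using powr_mult_base[OF a, of "P - 1"] by (simp add: algebra_simps)
qed

text \<open>For \<open>t \<ge> 0\<close>, \<open>t powr P / P - 1 / P - (t - 1)\<close> is the deficit in Young's inequality
  \<open>t * 1 \<le> t powr P / P + (1 - 1 / P)\<close>, and \<open>s powr P / P - a powr P / P - a powr (P - 1) * (s - a)\<close>
  is the Bregman divergence of \<open>t powr P / P\<close>; both vanish only on the diagonal.\<close>

lemma Young_deficit_one_ge_tangent:
  fixes P t0 t :: real
  assumes P: "1 < P" and t0: "0 \<le> t0" and t: "0 \<le> t"
  shows "(t0 powr (P - 1) - 1) * (t - t0) \<le> t powr P / P - 1 / P - (t - 1)"
  using powr_tangent_le[OF P t0 t] powr_tangent_le[OF P zero_le_one t0]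
  by (simp add: algebra_simps)

lemma Young_deficit_one_nonneg:
  fixes P t :: real
  assumes "1 < P" "0 \<le> t"
  shows "0 \<le> t powr P / P - 1 / P - (t - 1)"
  using Young_deficit_one_ge_tangent[OF assms(1) zero_le_one assms(2)] by simp

lemma powr_le_Young_deficit_one_large:
  fixes P t :: real
  assumes P: "1 < P" and t: "(2 * P) powr (1 / (P - 1)) \<le> t"
  shows "t powr P \<le> 2 * P * (t powr P / P - 1 / P - (t - 1))"
proof -
  have t0: "0 < t" using t P by (smt (verit) powr_gt_zero)
  have "2 * P = ((2 * P) powr (1 / (P - 1))) powr (P - 1)"
    using P by (simp add: powr_powr)
  also have "\<dots> \<le> t powr (P - 1)"
    using t P by (intro powr_mono2) auto
  finally have "2 * P * t \<le> t powr (P - 1) * t"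
    using t0 by (intro mult_right_mono) auto
  also have "t powr (P - 1) * t = t powr P"
    using powr_mult_base[of t "P - 1"] t0 by (simp add: mult.commute)
  finally have "2 * P * t \<le> t powr P" .
  moreover have "2 * P * (t powr P / P - 1 / P - (t - 1)) = 2 * t powr P - 2 * P * t + 2 * (P - 1)"
    using P by (simp add: field_simps)
  ultimately show ?thesis using P by simp
qed

lemma Young_deficit_one_ge_linear:
  fixes P \<delta> :: real
  assumes P: "1 < P" and \<delta>: "0 < \<delta>" "\<delta> < 1"
  obtains \<kappa> where "0 < \<kappa>"
    and "\<And>t. 0 \<le> t \<Longrightarrow> \<delta> \<le> \<bar>t - 1\<bar> \<Longrightarrow> \<kappa> * \<bar>t - 1\<bar> \<le> t powr P / P - 1 / P - (t - 1)"
proof -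
  define \<kappa>\<^sub>1 where "\<kappa>\<^sub>1 = 1 - (1 - \<delta> / 2) powr (P - 1)"
  define \<kappa>\<^sub>2 where "\<kappa>\<^sub>2 = (1 + \<delta> / 2) powr (P - 1) - 1"
  have "(1 - \<delta> / 2) powr (P - 1) < 1 powr (P - 1)" "1 powr (P - 1) < (1 + \<delta> / 2) powr (P - 1)"
    using P \<delta> by (intro powr_less_mono2; simp)+
  then have \<kappa>: "0 < \<kappa>\<^sub>1" "0 < \<kappa>\<^sub>2" by (auto simp: \<kappa>\<^sub>1_def \<kappa>\<^sub>2_def)
  have "min \<kappa>\<^sub>1 \<kappa>\<^sub>2 / 2 * \<bar>t - 1\<bar> \<le> t powr P / P - 1 / P - (t - 1)"
    if t: "0 \<le> t" "\<delta> \<le> \<bar>t - 1\<bar>" for t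
  proof (cases "t < 1")
    case True
    have "min \<kappa>\<^sub>1 \<kappa>\<^sub>2 / 2 * \<bar>t - 1\<bar> \<le> \<kappa>\<^sub>1 / 2 * \<bar>t - 1\<bar>"
      by (intro mult_right_mono) auto
    also have "\<dots> = \<kappa>\<^sub>1 * ((1 - t) / 2)" using True by simp
    also have "\<dots> \<le> \<kappa>\<^sub>1 * (1 - \<delta> / 2 - t)"
      using True t \<kappa> by (intro mult_left_mono) auto
    also have "\<dots> \<le> t powr P / P - 1 / P - (t - 1)"
      using Young_deficit_one_ge_tangent[OF P _ t(1), of "1 - \<delta> / 2"] \<delta>
      by (simp add: \<kappa>\<^sub>1_def algebra_simps)
    finally show ?thesis .
  next
    case False
    have "min \<kappa>\<^sub>1 \<kappa>\<^sub>2 / 2 * \<bar>t - 1\<bar> \<le> \<kappa>\<^sub>2 / 2 * \<bar>t - 1\<bar>"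
      by (intro mult_right_mono) auto
    also have "\<dots> = \<kappa>\<^sub>2 * ((t - 1) / 2)" using False by simp
    also have "\<dots> \<le> \<kappa>\<^sub>2 * (t - (1 + \<delta> / 2))"
      using False t \<kappa> by (intro mult_left_mono) auto
    also have "\<dots> \<le> t powr P / P - 1 / P - (t - 1)"
      using Young_deficit_one_ge_tangent[OF P _ t(1), of "1 + \<delta> / 2"] \<delta>
      by (simp add: \<kappa>\<^sub>2_def)
    finally show ?thesis .
  qed
  moreover have "0 < min \<kappa>\<^sub>1 \<kappa>\<^sub>2 / 2" using \<kappa> by simp
  ultimately show thesis using that by blast
qed

lemma powr_dist_one_le_Young_deficit:
  fixes P \<delta> :: real
  assumes P: "1 < P" and \<delta>: "0 < \<delta>" "\<delta> < 1"
  obtains C where "0 \<le> C"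
    and "\<And>t. 0 \<le> t \<Longrightarrow> \<delta> \<le> \<bar>t - 1\<bar> \<Longrightarrow>
           \<bar>t - 1\<bar> powr P \<le> C * (t powr P / P - 1 / P - (t - 1))"
proof -
  define y where "y t = t powr P / P - 1 / P - (t - 1)" for t
  obtain \<kappa> where \<kappa>: "0 < \<kappa>" and lin: "\<And>t. 0 \<le> t \<Longrightarrow> \<delta> \<le> \<bar>t - 1\<bar> \<Longrightarrow> \<kappa> * \<bar>t - 1\<bar> \<le> y t"
    using Young_deficit_one_ge_linear[OF P \<delta>] unfolding y_def by blast
  define T where "T = (2 * P) powr (1 / (P - 1))"
  define C where "C = max (1 / \<kappa>) (max (T powr (P - 1) / \<kappa>) (2 * P))"
  have "\<bar>t - 1\<bar> powr P \<le> C * y t" if t: "0 \<le> t" "\<delta> \<le> \<bar>t - 1\<bar>" for t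
  proof -
    have y: "0 \<le> y t" using Young_deficit_one_nonneg[OF P t(1)] by (simp add: y_def)
    have lin': "\<bar>t - 1\<bar> \<le> y t / \<kappa>" using lin[OF t] \<kappa> by (simp add: field_simps)
    consider "t < 1" | "1 \<le> t" "T \<le> t" | "1 \<le> t" "t < T" by linarith
    then show ?thesis
    proof cases
      case 1
      have "\<bar>t - 1\<bar> powr P \<le> \<bar>t - 1\<bar>" using 1 t P by (intro powr_le_one_le) auto
      also have "\<dots> \<le> (1 / \<kappa>) * y t" using lin' by simp
      also have "\<dots> \<le> C * y t" using y by (intro mult_right_mono) (auto simp: C_def)
      finally show ?thesis .
    next
      case 2
      have "\<bar>t - 1\<bar> powr P \<le> t powr P"
        using 2 P by (intro powr_mono2) auto
      also have "\<dots> \<le> 2 * P * y t"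
        using powr_le_Young_deficit_one_large[OF P] 2 by (simp add: y_def T_def)
      also have "\<dots> \<le> C * y t" using y by (intro mult_right_mono) (auto simp: C_def)
      finally show ?thesis .
    next
      case 3
      have "\<bar>t - 1\<bar> powr P = \<bar>t - 1\<bar> * (t - 1) powr (P - 1)"
        using 3 by (simp add: powr_mult_base)
      also have "\<dots> \<le> y t / \<kappa> * T powr (P - 1)"
        using 3 P lin' by (intro mult_mono powr_mono2) auto
      also have "\<dots> = (T powr (P - 1) / \<kappa>) * y t" by simp
      also have "\<dots> \<le> C * y t" using y by (intro mult_right_mono) (auto simp: C_def)
      finally show ?thesis .
    qed
  qed
  moreover have "0 \<le> C" using P by (simp add: C_def le_max_iff_disj)
  ultimately show thesis using that by (simp add: y_def)
qed

lemma powr_dist_one_le_eps_Young_deficit: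
  fixes P \<epsilon> :: real
  assumes P: "1 < P" and \<epsilon>: "0 < \<epsilon>"
  obtains C where "0 \<le> C"
    and "\<And>t. 0 \<le> t \<Longrightarrow>
           \<bar>t - 1\<bar> powr P \<le> \<epsilon> * (t powr P + 1) + C * (t powr P / P - 1 / P - (t - 1))"
proof -
  define \<delta> where "\<delta> = min (1 / 2) (\<epsilon> powr (1 / P))"
  have \<delta>: "0 < \<delta>" "\<delta> < 1" using \<epsilon> by (auto simp: \<delta>_def)
  obtain C where C: "0 \<le> C"
    and away: "\<And>t. 0 \<le> t \<Longrightarrow> \<delta> \<le> \<bar>t - 1\<bar> \<Longrightarrow>
                 \<bar>t - 1\<bar> powr P \<le> C * (t powr P / P - 1 / P - (t - 1))"
    using powr_dist_one_le_Young_deficit[OF P \<delta>] by blast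
  have "\<bar>t - 1\<bar> powr P \<le> \<epsilon> * (t powr P + 1) + C * (t powr P / P - 1 / P - (t - 1))"
    if t: "0 \<le> t" for t
  proof -
    have gap: "0 \<le> C * (t powr P / P - 1 / P - (t - 1))"
      using C Young_deficit_one_nonneg[OF P t] by simp
    have eps: "\<epsilon> \<le> \<epsilon> * (t powr P + 1)" using \<epsilon> by simp
    show ?thesis
    proof (cases "\<delta> \<le> \<bar>t - 1\<bar>")
      case True
      then show ?thesis using away[OF t] eps \<epsilon> by linarith
    next
      case False
      have "\<bar>t - 1\<bar> powr P \<le> (\<epsilon> powr (1 / P)) powr P"
        using False P by (intro powr_mono2) (auto simp: \<delta>_def)
      then have "\<bar>t - 1\<bar> powr P \<le> \<epsilon>" using P \<epsilon> by (simp add: powr_powr)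
      then show ?thesis using gap eps by linarith
    qed
  qed
  with C that show thesis by blast
qed

lemma Bregman_powr_eq_scaled:
  fixes P a s :: real
  assumes a: "0 < a" and s: "0 \<le> s"
  shows "s powr P / P - a powr P / P - a powr (P - 1) * (s - a)
    = a powr P * ((s / a) powr P / P - 1 / P - (s / a - 1))"
proof -
  have "a powr (P - 1) * a = a powr P" using a by (simp add: powr_mult_base mult.commute)
  then show ?thesis using a s by (simp add: powr_divide field_simps)
qed

lemma powr_dist_le_eps_Bregman:
  fixes P \<epsilon> :: real
  assumes P: "1 < P" and \<epsilon>: "0 < \<epsilon>"
  obtains C where "0 \<le> C"
    and "\<And>a s. 0 \<le> a \<Longrightarrow> 0 \<le> s \<Longrightarrow> \<bar>s - a\<bar> powr P
           \<le> \<epsilon> * (s powr P + a powr P) + C * (s powr P / P - a powr P / P - a powr (P - 1) * (s - a))"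
proof -
  obtain C where C: "0 \<le> C"
    and C1: "\<And>t. 0 \<le> t \<Longrightarrow>
              \<bar>t - 1\<bar> powr P \<le> \<epsilon> * (t powr P + 1) + C * (t powr P / P - 1 / P - (t - 1))"
    using powr_dist_one_le_eps_Young_deficit[OF P \<epsilon>] by blast
  define C' where "C' = max C P"
  have "\<bar>s - a\<bar> powr P
      \<le> \<epsilon> * (s powr P + a powr P) + C' * (s powr P / P - a powr P / P - a powr (P - 1) * (s - a))"
    if a: "0 \<le> a" and s: "0 \<le> s" for a s
  proof (cases "a = 0")
    case True
    have "s powr P \<le> C' * (s powr P / P)"
      using P by (simp add: C'_def field_simps mult_right_mono)
    moreover have "0 \<le> \<epsilon> * s powr P" using \<epsilon> by simp
    ultimately show ?thesis using True s by simp
  next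
    case False
    then have a0: "0 < a" using a by simp
    have "\<bar>s - a\<bar> = a * \<bar>s / a - 1\<bar>" using a0 by (simp add: field_simps abs_divide)
    then have "\<bar>s - a\<bar> powr P = a powr P * \<bar>s / a - 1\<bar> powr P" using a by (simp add: powr_mult)
    also have "\<dots> \<le> a powr P * (\<epsilon> * ((s / a) powr P + 1) + C * ((s / a) powr P / P - 1 / P - (s / a - 1)))"
      using C1[of "s / a"] a s by (intro mult_left_mono) auto
    also have "\<dots> = \<epsilon> * (a powr P * (s / a) powr P + a powr P)
        + C * (a powr P * ((s / a) powr P / P - 1 / P - (s / a - 1)))"
      by (simp add: algebra_simps)
    also have "\<dots> = \<epsilon> * (s powr P + a powr P) + C * (s powr P / P - a powr P / P - a powr (P - 1) * (s - a))"
      using a0 s by (simp only: Bregman_powr_eq_scaled powr_divide) (simp add: powr_divide)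
    also have "\<dots> \<le> \<epsilon> * (s powr P + a powr P) + C' * (s powr P / P - a powr P / P - a powr (P - 1) * (s - a))"
      using powr_tangent_le[OF P a s] by (intro add_left_mono mult_right_mono) (auto simp: C'_def)
    finally show ?thesis .
  qed
  moreover have "0 \<le> C'" using C by (simp add: C'_def)
  ultimately show thesis using that by blast
qed

lemma power2_powr_half:
  fixes x r :: real
  shows "(x\<^sup>2) powr (r / 2) = \<bar>x\<bar> powr r"
proof -
  have "x\<^sup>2 = \<bar>x\<bar> powr 2" by simp
  then have "(x\<^sup>2) powr (r / 2) = \<bar>x\<bar> powr (2 * (r / 2))"
    by (simp only: powr_powr)
  then show ?thesis by simp
qed

lemma powr_le_eps_powr_if_large:
  fixes r \<epsilon> \<tau> \<sigma> :: real
  assumes r: "0 < r" and \<epsilon>: "0 < \<epsilon>" and \<tau>: "16 * (1 / \<epsilon>) powr (1 / r) \<le> \<tau>" "\<tau> \<le> 4 * \<sigma>"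
  shows "\<tau> powr r \<le> \<epsilon> * \<sigma> powr (2 * r)"
proof -
  define T where "T = 16 * (1 / \<epsilon>) powr (1 / r)"
  have T: "0 < T" "T \<le> \<tau>" using \<epsilon> \<tau>(1) by (simp_all add: T_def)
  have "\<tau> powr r * (T / 16) powr r \<le> \<tau> powr r * (\<tau> / 16) powr r"
    using T r by (intro mult_left_mono powr_mono2) auto
  also have "\<tau> powr r * (\<tau> / 16) powr r = ((\<tau> / 4) powr 2) powr r"
    using T by (simp add: powr_mult[symmetric] power2_eq_square)
  also have "\<dots> = (\<tau> / 4) powr (2 * r)"
    using power2_powr_half[of "\<tau> / 4" "2 * r"] T by simp
  also have "\<dots> \<le> \<sigma> powr (2 * r)"
    using T \<tau>(2) r by (intro powr_mono2) auto
  also have "(T / 16) powr r = 1 / \<epsilon>"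
    using \<epsilon> r by (simp add: T_def powr_powr)
  finally show ?thesis using \<epsilon> by (simp add: field_simps)
qed

lemma powr_le_mult_if_between:
  fixes a b \<tau> r :: real
  assumes "0 < a" "a \<le> \<tau>" "\<tau> \<le> b"
  shows "\<tau> powr r \<le> (a powr (r - 1) + b powr (r - 1)) * \<tau>"
proof -
  have "\<tau> powr (r - 1) \<le> a powr (r - 1) + b powr (r - 1)"
  proof (cases "1 \<le> r")
    case True
    then have "\<tau> powr (r - 1) \<le> b powr (r - 1)" using assms by (intro powr_mono2) auto
    then show ?thesis using powr_ge_zero[of a "r - 1"] by linarith
  next
    case False
    then have "\<tau> powr (r - 1) \<le> a powr (r - 1)" using assms by (intro powr_mono2') auto
    then show ?thesis using powr_ge_zero[of b "r - 1"] by linarith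
  qed
  then have "\<tau> * \<tau> powr (r - 1) \<le> (a powr (r - 1) + b powr (r - 1)) * \<tau>"
    using assms by (metis mult.commute mult_left_mono order.trans less_imp_le)
  moreover have "\<tau> * \<tau> powr (r - 1) = \<tau> powr r" using assms by (simp add: powr_mult_base)
  ultimately show ?thesis by simp
qed

lemma powr_le_eps_plus_linear:
  fixes r \<epsilon> :: real
  assumes r: "0 < r" and \<epsilon>: "0 < \<epsilon>"
  obtains K where "0 \<le> K"
    and "\<And>\<tau> \<sigma>. 0 \<le> \<tau> \<Longrightarrow> \<tau> \<le> 4 * \<sigma> \<Longrightarrow> \<tau> powr r \<le> \<epsilon> * (\<sigma> powr (2 * r) + 1) + K * \<tau>"
proof -
  define t\<^sub>0 where "t\<^sub>0 = \<epsilon> powr (1 / r)"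
  define T where "T = 16 * (1 / \<epsilon>) powr (1 / r)"
  define K where "K = t\<^sub>0 powr (r - 1) + T powr (r - 1)"
  have t\<^sub>0: "0 < t\<^sub>0" using \<epsilon> by (simp add: t\<^sub>0_def)
  have K: "0 \<le> K" by (simp add: K_def)
  have "\<tau> powr r \<le> \<epsilon> * (\<sigma> powr (2 * r) + 1) + K * \<tau>" if \<tau>: "0 \<le> \<tau>" "\<tau> \<le> 4 * \<sigma>" for \<tau> \<sigma>
  proof -
    have rest: "0 \<le> \<epsilon> * \<sigma> powr (2 * r)" "0 \<le> \<epsilon>" "0 \<le> K * \<tau>" using \<epsilon> K \<tau> by simp_all
    consider "\<tau> \<le> t\<^sub>0" | "T \<le> \<tau>" | "t\<^sub>0 \<le> \<tau>" "\<tau> \<le> T" by linarith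
    then show ?thesis
    proof cases
      case 1
      have "\<tau> powr r \<le> t\<^sub>0 powr r" using 1 \<tau> r by (intro powr_mono2) auto
      also have "\<dots> = \<epsilon>" using \<epsilon> r by (simp add: t\<^sub>0_def powr_powr)
      finally show ?thesis unfolding distrib_left using rest by linarith
    next
      case 2
      then have "\<tau> powr r \<le> \<epsilon> * \<sigma> powr (2 * r)"
        using powr_le_eps_powr_if_large[OF r \<epsilon> _ \<tau>(2)] by (simp add: T_def)
      then show ?thesis unfolding distrib_left using rest by linarith
    next
      case 3
      then have "\<tau> powr r \<le> K * \<tau>"
        unfolding K_def by (intro powr_le_mult_if_between[OF t\<^sub>0])
      then show ?thesis unfolding distrib_left using rest by linarith
    qed
  qed
  with K that show thesis by blast
qed

lemma powr_angular_defect_le: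
  fixes P \<epsilon> :: real
  assumes P: "1 < P" and \<epsilon>: "0 < \<epsilon>"
  obtains C where "0 \<le> C"
    and "\<And>a s W. 0 \<le> a \<Longrightarrow> 0 \<le> s \<Longrightarrow> 0 \<le> W \<Longrightarrow> W \<le> 2 * a * s \<Longrightarrow>
           (2 * W) powr (P / 2) \<le> \<epsilon> * (s powr P + a powr P) + C * (a powr (P - 2) * W)"
proof -
  obtain K where K: "0 \<le> K"
    and K1: "\<And>\<tau> \<sigma>. 0 \<le> \<tau> \<Longrightarrow> \<tau> \<le> 4 * \<sigma> \<Longrightarrow>
               \<tau> powr (P / 2) \<le> \<epsilon> * (\<sigma> powr (2 * (P / 2)) + 1) + K * \<tau>"
    using powr_le_eps_plus_linear[of "P / 2" \<epsilon>] P \<epsilon> by auto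
  have "(2 * W) powr (P / 2) \<le> \<epsilon> * (s powr P + a powr P) + (2 * K) * (a powr (P - 2) * W)"
    if a: "0 \<le> a" and s: "0 \<le> s" and W: "0 \<le> W" "W \<le> 2 * a * s" for a s W
  proof (cases "a = 0")
    case True
    then show ?thesis using W \<epsilon> s by simp
  next
    case False
    then have a0: "0 < a" using a by simp
    define \<tau> where "\<tau> = 2 * W / a\<^sup>2"
    have \<tau>: "0 \<le> \<tau>" "\<tau> \<le> 4 * (s / a)"
      using W a0 by (auto simp: \<tau>_def power2_eq_square field_simps)
    have a2: "(a\<^sup>2) powr (P / 2) = a powr P"
      using a0 by (simp add: power2_powr_half)
    have "(2 * W) powr (P / 2) = \<tau> powr (P / 2) * a powr P"
      using a0 W by (simp add: \<tau>_def powr_mult[symmetric] a2[symmetric])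
    also have "\<dots> \<le> (\<epsilon> * ((s / a) powr P + 1) + K * \<tau>) * a powr P"
      using K1[OF \<tau>] by (intro mult_right_mono) auto
    also have "\<dots> = \<epsilon> * (s powr P + a powr P) + (2 * K) * (a powr P / a\<^sup>2 * W)"
      using a0 s by (simp add: \<tau>_def powr_divide field_simps)
    also have "a powr P / a\<^sup>2 = a powr (P - 2)"
      using a0 by (simp add: powr_diff)
    finally show ?thesis .
  qed
  moreover have "0 \<le> 2 * K" using K by simp
  ultimately show thesis using that by blast
qed

lemma powr_add_le_two_powr:
  fixes x y r :: real
  assumes "0 \<le> x" "0 \<le> y" "0 \<le> r"
  shows "(x + y) powr r \<le> 2 powr r * (x powr r + y powr r)"
proof -
  have "(x + y) powr r \<le> (2 * max x y) powr r" using assms by (intro powr_mono2) auto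
  also have "\<dots> = 2 powr r * max x y powr r" by (simp add: powr_mult)
  also have "\<dots> \<le> 2 powr r * (x powr r + y powr r)" by (intro mult_left_mono) (auto simp: max_def)
  finally show ?thesis .
qed

lemma power2_norm_diff_eq:
  fixes u v :: "'b::real_inner"
  shows "(norm (v - u))\<^sup>2 = (norm v - norm u)\<^sup>2 + 2 * (norm u * norm v - inner u v)"
  using dot_norm_neg[of u v] by (simp add: norm_minus_commute power2_diff algebra_simps)

lemma duality_gap_eq_Bregman_plus_angular:
  fixes P :: real and u v :: "'b::real_inner"
  shows "(1 - 1 / P) * norm u powr P + norm v powr P / P - norm u powr (P - 2) * inner u v
    = (norm v powr P / P - norm u powr P / P - norm u powr (P - 1) * (norm v - norm u))
      + norm u powr (P - 2) * (norm u * norm v - inner u v)"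
proof -
  have "norm u powr (P - 2) * norm u = norm u powr (P - 1)"
    "norm u powr (P - 1) * norm u = norm u powr P"
    by (auto simp: powr_mult_base mult.commute)
  then show ?thesis by (simp add: algebra_simps)
qed

lemma norm_diff_powr_le_radial_angular:
  fixes P :: real and u v :: "'b::real_inner"
  assumes "0 \<le> P"
  shows "norm (v - u) powr P
    \<le> 2 powr (P / 2) * (\<bar>norm v - norm u\<bar> powr P + (2 * (norm u * norm v - inner u v)) powr (P / 2))"
proof -
  have W: "0 \<le> 2 * (norm u * norm v - inner u v)"
    using norm_cauchy_schwarz[of u v] by simp
  have "norm (v - u) powr P = ((norm v - norm u)\<^sup>2 + 2 * (norm u * norm v - inner u v)) powr (P / 2)"
    using power2_powr_half[of "norm (v - u)" P] power2_norm_diff_eq[of v u] by simp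
  also have "\<dots> \<le> 2 powr (P / 2) * (((norm v - norm u)\<^sup>2) powr (P / 2) + (2 * (norm u * norm v - inner u v)) powr (P / 2))"
    using W assms by (intro powr_add_le_two_powr) auto
  finally show ?thesis by (simp add: power2_powr_half)
qed

lemma norm_diff_powr_le_eps_duality_gap:
  fixes P \<epsilon> :: real
  assumes P: "1 < P" and \<epsilon>: "0 < \<epsilon>"
  obtains C where "0 \<le> C"
    and "\<And>u v :: 'b::real_inner. norm (v - u) powr P \<le> \<epsilon> * (norm v powr P + norm u powr P)
           + C * ((1 - 1 / P) * norm u powr P + norm v powr P / P - norm u powr (P - 2) * inner u v)"
proof -
  define \<epsilon>' where "\<epsilon>' = \<epsilon> / (2 * 2 powr (P / 2))"
  have "0 < \<epsilon>'" using \<epsilon> by (simp add: \<epsilon>'_def)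
  obtain C\<^sub>1 where C\<^sub>1: "0 \<le> C\<^sub>1"
    and radial: "\<And>a s. 0 \<le> a \<Longrightarrow> 0 \<le> s \<Longrightarrow> \<bar>s - a\<bar> powr P
           \<le> \<epsilon>' * (s powr P + a powr P) + C\<^sub>1 * (s powr P / P - a powr P / P - a powr (P - 1) * (s - a))"
    using powr_dist_le_eps_Bregman[OF P \<open>0 < \<epsilon>'\<close>] by blast
  obtain C\<^sub>2 where C\<^sub>2: "0 \<le> C\<^sub>2"
    and angular: "\<And>a s W. 0 \<le> a \<Longrightarrow> 0 \<le> s \<Longrightarrow> 0 \<le> W \<Longrightarrow> W \<le> 2 * a * s \<Longrightarrow>
           (2 * W) powr (P / 2) \<le> \<epsilon>' * (s powr P + a powr P) + C\<^sub>2 * (a powr (P - 2) * W)"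
    using powr_angular_defect_le[OF P \<open>0 < \<epsilon>'\<close>] by blast
  define C where "C = 2 powr (P / 2) * (C\<^sub>1 + C\<^sub>2)"
  have "norm (v - u) powr P \<le> \<epsilon> * (norm v powr P + norm u powr P)
           + C * ((1 - 1 / P) * norm u powr P + norm v powr P / P - norm u powr (P - 2) * inner u v)"
    for u v :: 'b
  proof -
    define a s where "a = norm u" and "s = norm v"
    define W where "W = a * s - inner u v"
    define B where "B = s powr P / P - a powr P / P - a powr (P - 1) * (s - a)"
    have as: "0 \<le> a" "0 \<le> s" by (simp_all add: a_def s_def)
    have W: "0 \<le> W" "W \<le> 2 * a * s"
      using Cauchy_Schwarz_ineq2[of u v] by (auto simp: W_def a_def s_def abs_le_iff)
    have B: "0 \<le> B" using powr_tangent_le[OF P as] by (simp add: B_def)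
    have "norm (v - u) powr P \<le> 2 powr (P / 2) * (\<bar>s - a\<bar> powr P + (2 * W) powr (P / 2))"
      using norm_diff_powr_le_radial_angular[where u = u and v = v] P by (simp add: a_def s_def W_def)
    also have "\<dots> \<le> 2 powr (P / 2) * ((\<epsilon>' * (s powr P + a powr P) + C\<^sub>1 * B)
                            + (\<epsilon>' * (s powr P + a powr P) + C\<^sub>2 * (a powr (P - 2) * W)))"
      using radial[OF as] angular[OF as W] by (intro mult_left_mono add_mono) (auto simp: B_def)
    also have "\<dots> = \<epsilon> * (s powr P + a powr P) + 2 powr (P / 2) * (C\<^sub>1 * B + C\<^sub>2 * (a powr (P - 2) * W))"
      by (simp add: \<epsilon>'_def field_simps)
    also have "\<dots> \<le> \<epsilon> * (s powr P + a powr P) + C * (B + a powr (P - 2) * W)"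
    proof -
      have "C\<^sub>1 * B + C\<^sub>2 * (a powr (P - 2) * W) \<le> (C\<^sub>1 + C\<^sub>2) * (B + a powr (P - 2) * W)"
        using C\<^sub>1 C\<^sub>2 B W by (simp add: algebra_simps)
      then show ?thesis unfolding C_def by (simp add: mult.assoc)
    qed
    finally show ?thesis
      by (simp add: duality_gap_eq_Bregman_plus_angular a_def s_def B_def W_def)
  qed
  moreover have "0 \<le> C" using C\<^sub>1 C\<^sub>2 by (simp add: C_def)
  ultimately show thesis using that by blast
qed

lemma norm_diff_duality_powr_le_eps_Young_gap:
  fixes P Q \<epsilon> :: real
  assumes P: "1 < P" and Q: "Q = P / (P - 1)" and \<epsilon>: "0 < \<epsilon>"
  obtains C where "0 \<le> C"
    and "\<And>h v :: 'b::real_inner. norm (v - norm h powr (Q - 2) *\<^sub>R h) powr P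
           \<le> \<epsilon> * (norm v powr P + norm h powr Q) + C * (norm h powr Q / Q + norm v powr P / P - inner h v)"
proof -
  obtain C where C: "0 \<le> C"
    and core: "\<And>u v :: 'b. norm (v - u) powr P \<le> \<epsilon> * (norm v powr P + norm u powr P)
           + C * ((1 - 1 / P) * norm u powr P + norm v powr P / P - norm u powr (P - 2) * inner u v)"
    using norm_diff_powr_le_eps_duality_gap[OF P \<epsilon>] by blast
  have exps: "1 - 1 / P = 1 / Q" "(Q - 1) * P = Q" "(Q - 1) * (P - 2) + (Q - 2) = 0"
    using P by (auto simp: Q field_simps)
  have "norm (v - norm h powr (Q - 2) *\<^sub>R h) powr P
      \<le> \<epsilon> * (norm v powr P + norm h powr Q) + C * (norm h powr Q / Q + norm v powr P / P - inner h v)"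
    for h v :: 'b
  proof (cases "h = 0")
    case True
    then show ?thesis using core[where u = 0 and v = v] by simp
  next
    case False
    define b where "b = norm h"
    have b: "0 < b" using False by (simp add: b_def)
    define u where "u = b powr (Q - 2) *\<^sub>R h"
    have "norm u = b powr (Q - 2) * b powr 1" using b by (simp add: u_def b_def)
    also have "\<dots> = b powr (Q - 1)" by (simp only: powr_add[symmetric]) simp
    finally have nu: "norm u = b powr (Q - 1)" .
    have "norm u powr P = norm h powr Q" using exps(2) by (simp add: nu powr_powr b_def)
    moreover have "norm u powr (P - 2) * inner u v = (b powr ((Q - 1) * (P - 2)) * b powr (Q - 2)) * inner h v"
      unfolding nu by (simp add: u_def powr_powr)
    moreover have "b powr ((Q - 1) * (P - 2)) * b powr (Q - 2) = 1"
      using b by (simp only: powr_add[symmetric] exps(3)) auto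
    moreover have "norm h powr (Q - 2) *\<^sub>R h = u" by (simp add: u_def b_def)
    ultimately show ?thesis using core[where u = u and v = v] exps(1) by simp
  qed
  with C that show thesis by blast
qed

section \<open>The scalar field\<close>

text \<open>The scalar field is not known to be second countable as a type, so the library's
  measurability rules for pointwise operations do not apply to it. It is, however, at most
  two-dimensional over the reals, and measurability is transported through real coordinates.\<close>

lemma inner_mult_self:
  fixes a b :: "'k::{real_inner,real_normed_field}"
  shows "inner (a * b) (a * b) = inner a a * inner b b"
  by (metis norm_mult power2_norm_eq_inner power_mult_distrib)

lemma inner_one_one [simp]: "inner (1::'k::{real_inner,real_normed_field}) 1 = 1"
  by (metis norm_one power2_norm_eq_inner one_power2)

lemma square_eq_neg_inner_self_if_orthogonal_one:
  fixes x :: "'k::{real_inner,real_normed_field}"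
  assumes x: "inner x 1 = 0"
  shows "x * x = - of_real (inner x x)"
proof -
  have "inner (x * x - 1) (x * x - 1) = inner (x + 1) (x + 1) * inner (x - 1) (x - 1)"
    using inner_mult_self[of "x + 1" "x - 1"] by (simp add: algebra_simps)
  also have "\<dots> = (inner x x + 1)\<^sup>2"
    using x by (simp add: inner_add_left inner_add_right inner_diff_left inner_diff_right
        inner_commute power2_eq_square)
  finally have "inner (x * x) 1 = - inner x x"
    using inner_mult_self[of x x]
    by (simp add: inner_commute power2_eq_square algebra_simps)
  then have "inner (x * x + of_real (inner x x)) (x * x + of_real (inner x x)) = 0"
    using inner_mult_self[of x x]
    by (simp add: of_real_def inner_commute algebra_simps)
  then show ?thesis by (simp add: eq_neg_iff_add_eq_0)
qed

lemma orthogonal_one_unit_eq_or_neg: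
  fixes u e :: "'k::{real_inner,real_normed_field}"
  assumes "inner u 1 = 0" "inner e 1 = 0" "norm u = 1" "norm e = 1"
  shows "u = e \<or> u = - e"
proof -
  have "inner u u = 1" "inner e e = 1"
    using assms(3,4) by (metis power2_norm_eq_inner one_power2)+
  then have "(u - e) * (u + e) = 0"
    using square_eq_neg_inner_self_if_orthogonal_one[OF assms(1)]
      square_eq_neg_inner_self_if_orthogonal_one[OF assms(2)]
    by (simp add: algebra_simps)
  then show ?thesis by (auto simp: eq_neg_iff_add_eq_0)
qed

lemma orthogonal_one_and_unit_eq_0:
  fixes w e :: "'k::{real_inner,real_normed_field}"
  assumes w: "inner w 1 = 0" "inner w e = 0" and e: "inner e 1 = 0" "norm e = 1"
  shows "w = 0"
proof (rule ccontr)
  assume "w \<noteq> 0"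
  then have "(1 / norm w) *\<^sub>R w = e \<or> (1 / norm w) *\<^sub>R w = - e"
    using w e by (intro orthogonal_one_unit_eq_or_neg) auto
  moreover have "inner e e = 1" using e(2) by (metis power2_norm_eq_inner one_power2)
  ultimately have "inner ((1 / norm w) *\<^sub>R w) e \<noteq> 0" by (metis inner_minus_left neg_equal_0_iff_equal zero_neq_one)
  with w(2) show False by simp
qed

lemma inner_field_coordinates:
  obtains e :: "'k::{real_inner,real_normed_field}"
  where "\<And>v. v = inner v 1 *\<^sub>R 1 + inner v e *\<^sub>R e"
proof (cases "\<forall>v::'k. v = inner v 1 *\<^sub>R 1")
  case True
  then show thesis by (intro that[of 0]) auto
next
  case False
  then obtain v\<^sub>0 :: 'k where "v\<^sub>0 - inner v\<^sub>0 1 *\<^sub>R 1 \<noteq> 0" by auto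
  moreover define e where "e = (1 / norm (v\<^sub>0 - inner v\<^sub>0 1 *\<^sub>R 1)) *\<^sub>R (v\<^sub>0 - inner v\<^sub>0 1 *\<^sub>R 1)"
  ultimately have e: "inner e 1 = 0" "norm e = 1" "inner e e = 1"
    by (auto simp: inner_diff_left dot_square_norm)
  have "inner 1 e = 0" using e(1) by (simp add: inner_commute)
  then have "v - inner v 1 *\<^sub>R 1 - inner v e *\<^sub>R e = 0" for v
    using e by (intro orthogonal_one_and_unit_eq_0[of _ e]) (simp_all add: inner_diff_left)
  then show thesis by (intro that[of e]) (simp add: algebra_simps)
qed

lemma borel_measurable_inner_field_Pair:
  fixes u v :: "'a \<Rightarrow> 'k::{real_inner,real_normed_field}" and F :: "'k \<Rightarrow> 'k \<Rightarrow> 'b::topological_space"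
  assumes u: "u \<in> borel_measurable M" and v: "v \<in> borel_measurable M"
    and F: "continuous_on UNIV (\<lambda>z. F (fst z) (snd z))"
  shows "(\<lambda>x. F (u x) (v x)) \<in> borel_measurable M"
proof -
  obtain e :: 'k where e: "\<And>z. z = inner z 1 *\<^sub>R 1 + inner z e *\<^sub>R e"
    using inner_field_coordinates by blast
  define \<Phi> where "\<Phi> p = fst p *\<^sub>R (1::'k) + snd p *\<^sub>R e" for p :: "real \<times> real"
  define c where "c z = (inner z 1, inner z e)" for z :: 'k
  have \<Phi>c: "\<Phi> (c z) = z" for z by (simp add: \<Phi>_def c_def e[symmetric])
  have "continuous_on UNIV c" unfolding c_def by (intro continuous_intros)
  then have c_meas: "(\<lambda>x. c (w x)) \<in> borel_measurable M" if "w \<in> borel_measurable M" for w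
    using borel_measurable_continuous_on that by blast
  have "continuous_on UNIV (\<lambda>z. (\<Phi> (fst z), \<Phi> (snd z)))"
    unfolding \<Phi>_def by (intro continuous_intros)
  then have "continuous_on UNIV (\<lambda>z. F (fst (\<Phi> (fst z), \<Phi> (snd z))) (snd (\<Phi> (fst z), \<Phi> (snd z))))"
    by (rule continuous_on_compose2[OF F]) simp
  then have "(\<lambda>x. F (\<Phi> (c (u x))) (\<Phi> (c (v x)))) \<in> borel_measurable M"
    by (intro borel_measurable_continuous_Pair[OF c_meas[OF u] c_meas[OF v]]) simp
  then show ?thesis by (simp add: \<Phi>c)
qed

lemma borel_measurable_inner_field_scaleR:
  fixes u :: "'a \<Rightarrow> 'k::{real_inner,real_normed_field}"
  assumes f: "f \<in> borel_measurable M" and u: "u \<in> borel_measurable M"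
  shows "(\<lambda>x. f x *\<^sub>R u x) \<in> borel_measurable M"
proof -
  have "continuous_on UNIV (of_real :: real \<Rightarrow> 'k)" by (intro continuous_intros)
  then have "(\<lambda>x. of_real (f x) :: 'k) \<in> borel_measurable M"
    using f by (rule borel_measurable_continuous_on)
  moreover have "continuous_on UNIV (\<lambda>z::'k \<times> 'k. fst z * snd z)" by (intro continuous_intros)
  ultimately have "(\<lambda>x. of_real (f x) * u x) \<in> borel_measurable M"
    using borel_measurable_inner_field_Pair[where F = "(*)", OF _ u] by blast
  then show ?thesis by (simp add: scaleR_conv_of_real)
qed

section \<open>L^q spaces and the duality map\<close>

lemma Lq_norm_nonneg: "0 \<le> Lq_norm M q u"
  by (simp add: Lq_norm_def)

lemma Lq_norm_powr:
  assumes "0 < q"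
  shows "Lq_norm M q u powr q = (\<integral>x. norm (u x) powr q \<partial>M)"
  using assms by (simp add: Lq_norm_def powr_powr)

lemma Lq_space_diff:
  fixes u v :: "'a \<Rightarrow> 'k::{real_inner,real_normed_field}"
  assumes q: "0 < q" and u: "u \<in> Lq_space M q" and v: "v \<in> Lq_space M q"
  shows "(\<lambda>x. u x - v x) \<in> Lq_space M q"
proof -
  have "continuous_on UNIV (\<lambda>z::'k \<times> 'k. fst z - snd z)" by (intro continuous_intros)
  then have meas: "(\<lambda>x. u x - v x) \<in> borel_measurable M"
    using u v borel_measurable_inner_field_Pair[where F = "(-)"] by (auto simp: Lq_space_def)
  have "norm (u x - v x) powr q \<le> (norm (u x) + norm (v x)) powr q" for x
    using q by (intro powr_mono2) (auto simp: norm_triangle_ineq4)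
  also have "(norm (u x) + norm (v x)) powr q \<le> 2 powr q * (norm (u x) powr q + norm (v x) powr q)" for x
    using q by (intro powr_add_le_two_powr) auto
  finally have bound: "norm (u x - v x) powr q \<le> 2 powr q * (norm (u x) powr q + norm (v x) powr q)" for x .
  have "integrable M (\<lambda>x. norm (u x - v x) powr q)"
  proof (rule Bochner_Integration.integrable_bound)
    show "integrable M (\<lambda>x. 2 powr q * (norm (u x) powr q + norm (v x) powr q))"
      using u v by (intro integrable_mult_right Bochner_Integration.integrable_add) (simp_all add: Lq_space_def)
    show "(\<lambda>x. norm (u x - v x) powr q) \<in> borel_measurable M" using meas by measurable
    show "AE x in M. norm (norm (u x - v x) powr q) \<le> norm (2 powr q * (norm (u x) powr q + norm (v x) powr q))"
      using bound by (intro AE_I2) simp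
  qed
  with meas show ?thesis by (simp add: Lq_space_def)
qed

lemma integrable_mult_conjugate_powr:
  fixes f g :: "'a \<Rightarrow> real"
  assumes p: "1 < p" and q: "1 < q" and pq: "1 / p + 1 / q = 1"
    and f: "f \<in> borel_measurable M" "\<And>x. 0 \<le> f x" "integrable M (\<lambda>x. f x powr p)"
    and g: "g \<in> borel_measurable M" "\<And>x. 0 \<le> g x" "integrable M (\<lambda>x. g x powr q)"
  shows "integrable M (\<lambda>x. f x * g x)"
proof (rule Bochner_Integration.integrable_bound)
  show "integrable M (\<lambda>x. f x powr p / p + g x powr q / q)"
    using f(3) g(3) by (intro Bochner_Integration.integrable_add integrable_divide)
  show "(\<lambda>x. f x * g x) \<in> borel_measurable M" using f(1) g(1) by measurable
  have "f x * g x \<le> f x powr p / p + g x powr q / q" for x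
    using Youngs_inequality[OF p q pq f(2) g(2)] .
  then show "AE x in M. norm (f x * g x) \<le> norm (f x powr p / p + g x powr q / q)"
    using f(2) g(2) by (intro AE_I2) (simp add: abs_mult order.trans[OF _ abs_ge_self])
qed

lemma Holder_inequality_nonneg:
  fixes f g :: "'a \<Rightarrow> real"
  assumes p: "1 < p" and q: "1 < q" and pq: "1 / p + 1 / q = 1"
    and f: "f \<in> borel_measurable M" "\<And>x. 0 \<le> f x" "integrable M (\<lambda>x. f x powr p)"
    and g: "g \<in> borel_measurable M" "\<And>x. 0 \<le> g x" "integrable M (\<lambda>x. g x powr q)"
  shows "(\<integral>x. f x * g x \<partial>M) \<le> (\<integral>x. f x powr p \<partial>M) powr (1 / p) * (\<integral>x. g x powr q \<partial>M) powr (1 / q)"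
proof -
  define A B where "A = (\<integral>x. f x powr p \<partial>M)" and "B = (\<integral>x. g x powr q \<partial>M)"
  have AB: "0 \<le> A" "0 \<le> B" by (simp_all add: A_def B_def)
  show "(\<integral>x. f x * g x \<partial>M) \<le> A powr (1 / p) * B powr (1 / q)"
  proof (cases "A = 0 \<or> B = 0")
    case True
    then have "(AE x in M. f x powr p = 0) \<or> (AE x in M. g x powr q = 0)"
      using integral_nonneg_eq_0_iff_AE[OF f(3)] integral_nonneg_eq_0_iff_AE[OF g(3)]
      by (auto simp: A_def B_def)
    then have "AE x in M. f x * g x = 0" by (auto elim: AE_mp)
    then show ?thesis by (simp add: integral_eq_zero_AE)
  next
    case False
    then have "0 < A" "0 < B" using AB by auto
    define a b where "a = A powr (1 / p)" and "b = B powr (1 / q)"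
    have ab: "0 < a" "0 < b" "a powr p = A" "b powr q = B"
      using \<open>0 < A\<close> \<open>0 < B\<close> p q by (simp_all add: a_def b_def powr_powr)
    have "f x * g x / (a * b) \<le> f x powr p / (p * A) + g x powr q / (q * B)" for x
      using Youngs_inequality[OF p q pq, of "f x / a" "g x / b"] f(2) g(2) ab
      by (simp add: powr_divide mult.commute)
    then have "(\<integral>x. f x * g x / (a * b) \<partial>M) \<le> (\<integral>x. f x powr p / (p * A) + g x powr q / (q * B) \<partial>M)"
      using integrable_mult_conjugate_powr[OF p q pq f g] f(3) g(3) by (intro integral_mono) auto
    also have "\<dots> = 1"
      using f(3) g(3) \<open>0 < A\<close> \<open>0 < B\<close> pq p q by (simp add: A_def[symmetric] B_def[symmetric])
    finally have "(\<integral>x. f x * g x \<partial>M) \<le> a * b" using ab by (simp add: field_simps)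
    then show ?thesis by (simp add: a_def b_def)
  qed
qed

lemma Lq_Holder_inner:
  fixes u v :: "'a \<Rightarrow> 'k::{real_inner,real_normed_field}"
  assumes p: "1 < p" and q: "1 < q" and pq: "1 / p + 1 / q = 1"
    and u: "u \<in> Lq_space M p" and v: "v \<in> Lq_space M q"
  shows "integrable M (\<lambda>x. inner (u x) (v x))"
    and "\<bar>\<integral>x. inner (u x) (v x) \<partial>M\<bar> \<le> Lq_norm M p u * Lq_norm M q v"
proof -
  have meas: "u \<in> borel_measurable M" "v \<in> borel_measurable M"
    using u v by (simp_all add: Lq_space_def)
  have int: "integrable M (\<lambda>x. norm (u x) * norm (v x))"
    using integrable_mult_conjugate_powr[OF p q pq, of "\<lambda>x. norm (u x)" M "\<lambda>x. norm (v x)"] u v meas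
    by (auto simp: Lq_space_def)
  have "continuous_on UNIV (\<lambda>z::'k \<times> 'k. inner (fst z) (snd z))" by (intro continuous_intros)
  then have "(\<lambda>x. inner (u x) (v x)) \<in> borel_measurable M"
    using meas borel_measurable_inner_field_Pair[where F = inner] by blast
  then show inner_int: "integrable M (\<lambda>x. inner (u x) (v x))"
    by (rule Bochner_Integration.integrable_bound[OF int]) (auto intro!: AE_I2 Cauchy_Schwarz_ineq2)
  have "\<bar>\<integral>x. inner (u x) (v x) \<partial>M\<bar> \<le> (\<integral>x. norm (inner (u x) (v x)) \<partial>M)"
    using integral_norm_bound[of M "\<lambda>x. inner (u x) (v x)"] by simp
  also have "\<dots> \<le> (\<integral>x. norm (u x) * norm (v x) \<partial>M)"
    using int inner_int by (intro integral_mono) (auto intro: Cauchy_Schwarz_ineq2)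
  also have "\<dots> \<le> Lq_norm M p u * Lq_norm M q v"
    using Holder_inequality_nonneg[OF p q pq, of "\<lambda>x. norm (u x)" M "\<lambda>x. norm (v x)"] u v meas
    by (auto simp: Lq_space_def Lq_norm_def)
  finally show "\<bar>\<integral>x. inner (u x) (v x) \<partial>M\<bar> \<le> Lq_norm M p u * Lq_norm M q v" .
qed

lemma duality_map_eq:
  "duality_map M q u x = (Lq_norm M q u powr (1 - q) * norm (u x) powr (q - 2)) *\<^sub>R u x"
  by (simp add: duality_map_def)

lemma norm_duality_map:
  "norm (duality_map M q u x) = Lq_norm M q u powr (1 - q) * norm (u x) powr (q - 1)"
proof -
  have "norm (u x) powr (q - 2) * norm (u x) powr 1 = norm (u x) powr (q - 1)"
    by (simp only: powr_add[symmetric]) simp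
  then show ?thesis by (simp add: duality_map_eq mult.assoc)
qed

lemma norm_duality_map_powr:
  assumes q: "1 < q" and q': "q' = q / (q - 1)"
  shows "norm (duality_map M q u x) powr q' = Lq_norm M q u powr (- q) * norm (u x) powr q"
proof -
  have "(1 - q) * q' = - q" "(q - 1) * q' = q" using q by (simp_all add: q' field_simps)
  then show ?thesis by (simp add: norm_duality_map powr_mult powr_powr Lq_norm_nonneg)
qed

lemma Lq_norm_duality_map:
  assumes q: "1 < q" and q': "q' = q / (q - 1)" and N: "0 < Lq_norm M q u"
  shows "Lq_norm M q' (duality_map M q u) = 1"
proof -
  have "(\<integral>x. norm (duality_map M q u x) powr q' \<partial>M) = Lq_norm M q u powr (- q) * Lq_norm M q u powr q"
    using q by (simp add: norm_duality_map_powr[OF q q'] Lq_norm_powr)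
  also have "\<dots> = 1" using N by (simp add: powr_add[symmetric])
  finally show ?thesis by (simp add: Lq_norm_def)
qed

lemma integral_inner_duality_map:
  assumes q: "1 < q" and N: "0 < Lq_norm M q u"
  shows "(\<integral>x. inner (u x) (duality_map M q u x) \<partial>M) = Lq_norm M q u"
proof -
  have "norm (u x) powr (q - 2) * (norm (u x))\<^sup>2 = norm (u x) powr q" for x
  proof -
    have "norm (u x) powr (q - 2) * norm (u x) powr 2 = norm (u x) powr q"
      by (simp only: powr_add[symmetric]) simp
    then show ?thesis by simp
  qed
  then have "(\<integral>x. inner (u x) (duality_map M q u x) \<partial>M)
      = Lq_norm M q u powr (1 - q) * (\<integral>x. norm (u x) powr q \<partial>M)"
    by (simp add: duality_map_eq dot_square_norm mult.assoc)
  also have "\<dots> = Lq_norm M q u powr (1 - q) * Lq_norm M q u powr q"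
    using q by (simp add: Lq_norm_powr)
  also have "\<dots> = Lq_norm M q u" using N by (simp add: powr_add[symmetric])
  finally show ?thesis .
qed

lemma duality_map_eq_normalized:
  assumes N: "0 < Lq_norm M q u"
  shows "duality_map M q u x
    = norm ((1 / Lq_norm M q u) *\<^sub>R u x) powr (q - 2) *\<^sub>R ((1 / Lq_norm M q u) *\<^sub>R u x)"
proof -
  define N where "N = Lq_norm M q u"
  have "N powr (q - 2) * N powr 1 = N powr (q - 1)" by (simp only: powr_add[symmetric]) simp
  moreover have "N powr (1 - q) = inverse (N powr (q - 1))"
    using powr_minus[of N "q - 1"] by simp
  ultimately have "N powr (1 - q) = inverse (N powr (q - 2) * N)" using N by (simp add: N_def)
  then show ?thesis using N by (simp add: duality_map_eq powr_divide N_def[symmetric] field_simps)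
qed

lemma duality_map_in_Lq_space:
  fixes u :: "'a \<Rightarrow> 'k::{real_inner,real_normed_field}"
  assumes q: "1 < q" and q': "q' = q / (q - 1)" and u: "u \<in> Lq_space M q"
  shows "duality_map M q u \<in> Lq_space M q'"
proof -
  have um: "u \<in> borel_measurable M" using u by (simp add: Lq_space_def)
  then have "(\<lambda>x. Lq_norm M q u powr (1 - q) * norm (u x) powr (q - 2)) \<in> borel_measurable M"
    by measurable
  then have "duality_map M q u \<in> borel_measurable M"
    unfolding duality_map_eq by (rule borel_measurable_inner_field_scaleR[OF _ um])
  moreover have "integrable M (\<lambda>x. norm (duality_map M q u x) powr q')"
    using u unfolding norm_duality_map_powr[OF q q'] Lq_space_def by simp
  ultimately show ?thesis by (simp add: Lq_space_def)
qed
lemma norm_diff_duality_map_powr_le: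
  fixes u :: "'a \<Rightarrow> 'k::{real_inner,real_normed_field}"
  assumes N: "0 < Lq_norm M q u"
    and C: "\<And>h v :: 'k. norm (v - norm h powr (q - 2) *\<^sub>R h) powr q'
              \<le> \<epsilon> * (norm v powr q' + norm h powr q) + C * (norm h powr q / q + norm v powr q' / q' - inner h v)"
  shows "norm (v - duality_map M q u x) powr q'
    \<le> \<epsilon> * (norm v powr q' + norm (u x) powr q / Lq_norm M q u powr q)
      + C * (norm (u x) powr q / Lq_norm M q u powr q / q + norm v powr q' / q' - inner (u x) v / Lq_norm M q u)"
proof -
  have "norm ((1 / Lq_norm M q u) *\<^sub>R u x) powr q = norm (u x) powr q / Lq_norm M q u powr q"
    using N by (simp add: powr_divide)
  then show ?thesis
    using C[where h = "(1 / Lq_norm M q u) *\<^sub>R u x" and v = v] duality_map_eq_normalized[OF N, of x]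
    by simp
qed

lemma integral_norm_diff_duality_map_le:
  fixes u g :: "'a \<Rightarrow> 'k::{real_inner,real_normed_field}"
  assumes q: "1 < q" and q': "q' = q / (q - 1)"
    and u: "u \<in> Lq_space M q" and N: "0 < Lq_norm M q u"
    and g: "g \<in> Lq_space M q'" "Lq_norm M q' g = 1"
    and C: "\<And>h v :: 'k. norm (v - norm h powr (q - 2) *\<^sub>R h) powr q'
              \<le> \<epsilon> * (norm v powr q' + norm h powr q) + C * (norm h powr q / q + norm v powr q' / q' - inner h v)"
  shows "(\<integral>x. norm (g x - duality_map M q u x) powr q' \<partial>M)
    \<le> 2 * \<epsilon> + C * (1 - (\<integral>x. inner (u x) (g x) \<partial>M) / Lq_norm M q u)"
proof -
  define N where "N = Lq_norm M q u"
  define m where "m = (\<integral>x. inner (u x) (g x) \<partial>M)"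
  note conj = conjugate_exponent[OF q q']
  define R where "R x = \<epsilon> * (norm (g x) powr q' + norm (u x) powr q / N powr q)
      + C * (norm (u x) powr q / N powr q / q + norm (g x) powr q' / q' - inner (u x) (g x) / N)" for x
  have integrable: "integrable M (\<lambda>x. norm (g x - duality_map M q u x) powr q')"
    using Lq_space_diff[OF _ g(1) duality_map_in_Lq_space[OF q q' u]] conj(1)
    by (simp add: Lq_space_def)
  have R: "has_bochner_integral M R (\<epsilon> * (1 + 1) + C * (1 / q + 1 / q' - m / N))"
  proof -
    have "(\<integral>x. norm (g x) powr q' \<partial>M) = 1" "(\<integral>x. norm (u x) powr q / N powr q \<partial>M) = 1"
      using Lq_norm_powr[of q' M g] Lq_norm_powr[of q M u] g(2) N q conj(1)
      by (simp_all add: N_def flip: Lq_norm_powr)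
    moreover have "integrable M (\<lambda>x. norm (g x) powr q')" "integrable M (\<lambda>x. norm (u x) powr q / N powr q)"
      using g(1) u by (simp_all add: Lq_space_def)
    moreover have "integrable M (\<lambda>x. inner (u x) (g x))"
      using Lq_Holder_inner(1)[OF q conj(1,2) u g(1)] .
    ultimately show ?thesis unfolding R_def m_def
      by (intro has_bochner_integral_diff has_bochner_integral_add has_bochner_integral_mult_right
          has_bochner_integral_divide) (auto simp: has_bochner_integral_iff)
  qed
  have "(\<integral>x. norm (g x - duality_map M q u x) powr q' \<partial>M) \<le> integral\<^sup>L M R"
    using integrable R norm_diff_duality_map_powr_le[OF N C] unfolding R_def N_def
    by (intro integral_mono) (auto simp: has_bochner_integral_iff R_def)
  also have "\<dots> = 2 * \<epsilon> + C * (1 - m / N)"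
    using R conj(2) by (simp add: has_bochner_integral_iff)
  finally show ?thesis by (simp add: N_def m_def)
qed

lemma Lq_tendsto_duality_map:
  fixes u :: "'a \<Rightarrow> 'k::{real_inner,real_normed_field}" and gs :: "nat \<Rightarrow> 'a \<Rightarrow> 'k"
  assumes q: "1 < q" and q': "q' = q / (q - 1)"
    and u: "u \<in> Lq_space M q" and N: "0 < Lq_norm M q u"
    and gs: "\<And>n. gs n \<in> Lq_space M q'" "\<And>n. Lq_norm M q' (gs n) = 1"
    and lim: "(\<lambda>n. \<integral>x. inner (u x) (gs n x) \<partial>M) \<longlonglongrightarrow> Lq_norm M q u"
  shows "(\<lambda>n. Lq_norm M q' (\<lambda>x. gs n x - duality_map M q u x)) \<longlonglongrightarrow> 0"
proof -
  note conj = conjugate_exponent[OF q q']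
  define I where "I n = (\<integral>x. norm (gs n x - duality_map M q u x) powr q' \<partial>M)" for n
  have "I \<longlonglongrightarrow> 0"
  proof (rule order_tendstoI)
    fix e :: real assume "e < 0"
    then show "\<forall>\<^sub>F n in sequentially. e < I n" by (simp add: I_def less_le_trans)
  next
    fix e :: real assume e: "0 < e"
    then have "0 < e / 4" by simp
    from norm_diff_duality_powr_le_eps_Young_gap[OF conj(1,3) this]
    obtain C where C: "\<And>h v :: 'k. norm (v - norm h powr (q - 2) *\<^sub>R h) powr q'
        \<le> e / 4 * (norm v powr q' + norm h powr q) + C * (norm h powr q / q + norm v powr q' / q' - inner h v)"
      by blast
    have "(\<lambda>n. C * (1 - (\<integral>x. inner (u x) (gs n x) \<partial>M) / Lq_norm M q u)) \<longlonglongrightarrow> C * (1 - Lq_norm M q u / Lq_norm M q u)"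
      by (intro tendsto_intros lim) (use N in simp)
    then have "\<forall>\<^sub>F n in sequentially. C * (1 - (\<integral>x. inner (u x) (gs n x) \<partial>M) / Lq_norm M q u) < e / 4"
      using N e by (intro order_tendstoD(2)) auto
    then show "\<forall>\<^sub>F n in sequentially. I n < e"
    proof eventually_elim
      case (elim n)
      then show ?case
        using integral_norm_diff_duality_map_le[OF q q' u N gs(1,2)[of n] C] e unfolding I_def by linarith
    qed
  qed
  then have "(\<lambda>n. I n powr (1 / q')) \<longlonglongrightarrow> 0"
    by (rule tendsto_zero_powrI[OF _ tendsto_const]) (use conj(1) in \<open>auto simp: I_def\<close>)
  then show ?thesis by (simp add: I_def Lq_norm_def)
qed

section \<open>Unit vectors in inner product spaces\<close>

lemma tendsto_unit_of_inner_tendsto_norm: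
  fixes x y :: "nat \<Rightarrow> 'h::real_inner"
  assumes x: "\<And>n. norm (x n) = 1" and y: "y \<longlonglongrightarrow> c" and c: "c \<noteq> 0"
    and xy: "(\<lambda>n. inner (x n) (y n)) \<longlonglongrightarrow> norm c"
  shows "x \<longlonglongrightarrow> (1 / norm c) *\<^sub>R c"
proof -
  define e where "e n = x n - (1 / norm c) *\<^sub>R y n" for n
  have "inner (e n) (e n) = 1 - 2 / norm c * inner (x n) (y n) + (norm (y n) / norm c)\<^sup>2" for n
  proof -
    have "inner (x n) (x n) = 1" "inner (y n) (y n) = (norm (y n))\<^sup>2"
      using x[of n] by (metis power2_norm_eq_inner one_power2) (simp add: power2_norm_eq_inner)
    then show ?thesis
      by (simp add: e_def inner_diff_left inner_diff_right inner_commute power_divide power2_eq_square algebra_simps)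
  qed
  moreover have "(\<lambda>n. 1 - 2 / norm c * inner (x n) (y n) + (norm (y n) / norm c)\<^sup>2)
      \<longlonglongrightarrow> 1 - 2 / norm c * norm c + (norm c / norm c)\<^sup>2"
    using c by (intro tendsto_intros xy y) simp
  ultimately have "(\<lambda>n. inner (e n) (e n)) \<longlonglongrightarrow> 0" using c by simp
  then have "(\<lambda>n. sqrt (inner (e n) (e n))) \<longlonglongrightarrow> sqrt 0" by (rule tendsto_real_sqrt)
  then have "e \<longlonglongrightarrow> 0" by (simp add: norm_eq_sqrt_inner[symmetric] tendsto_norm_zero_iff)
  then have "(\<lambda>n. e n + (1 / norm c) *\<^sub>R y n) \<longlonglongrightarrow> 0 + (1 / norm c) *\<^sub>R c"
    by (intro tendsto_intros y)
  then show ?thesis by (simp add: e_def)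
qed

lemma tendsto_inner_diff_zero:
  fixes x y :: "nat \<Rightarrow> 'h::real_inner"
  assumes x: "x \<longlonglongrightarrow> a" and y: "(\<lambda>n. norm (y n)) \<longlonglongrightarrow> r"
  shows "(\<lambda>n. inner a (y n) - inner (x n) (y n)) \<longlonglongrightarrow> 0"
proof -
  have "(\<lambda>n. x n - a) \<longlonglongrightarrow> 0" using x by (rule LIM_zero)
  then have "(\<lambda>n. norm (x n - a) * norm (y n)) \<longlonglongrightarrow> 0 * r"
    using y by (intro tendsto_mult) (simp_all add: tendsto_norm_zero_iff)
  then have lim: "(\<lambda>n. norm (x n - a) * norm (y n)) \<longlonglongrightarrow> 0" by simp
  have bound: "\<forall>\<^sub>F n in sequentially. norm (inner a (y n) - inner (x n) (y n)) \<le> norm (x n - a) * norm (y n)"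
    using Cauchy_Schwarz_ineq2[of "a - x n" "y n" for n]
    by (intro always_eventually allI) (simp add: inner_diff_left norm_minus_commute)
  show ?thesis by (rule Lim_null_comparison[OF bound lim])
qed

section \<open>The operator and its adjoint\<close>

locale Lq_operator_adjoint =
  fixes M :: "'a measure" and q q' :: real
    and A :: "'h::{real_inner,complete_space} \<Rightarrow> 'a \<Rightarrow> 'k::{real_inner,real_normed_field}"
    and Astar :: "('a \<Rightarrow> 'k) \<Rightarrow> 'h"
    and \<alpha> :: real
  assumes q: "1 < q" and q': "q' = q / (q - 1)"
    and A_into: "\<And>f. A f \<in> Lq_space M q"
    and A_scale: "\<And>c f. AE x in M. A (c *\<^sub>R f) x = c *\<^sub>R A f x"
    and A_bounded: "\<exists>C. \<forall>f. Lq_norm M q (A f) \<le> C * norm f"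
    and adjoint: "\<And>g f. g \<in> Lq_space M q' \<Longrightarrow> inner f (Astar g) = (\<integral>x. inner (A f x) (g x) \<partial>M)"
    and alpha: "\<alpha> = op_norm_Lq M q A"
    and alpha_pos: "0 < \<alpha>"
begin

lemmas conjugate = conjugate_exponent[OF q q']

lemma Lq_norm_A_scaleR: "Lq_norm M q (A (c *\<^sub>R f)) = \<bar>c\<bar> * Lq_norm M q (A f)"
proof -
  have "(\<lambda>x. norm (A g x)) \<in> borel_measurable M" for g
    using A_into[of g] by (auto simp: Lq_space_def intro: measurable_compose[OF _ borel_measurable_norm])
  then have meas: "(\<lambda>x. norm (A g x) powr q) \<in> borel_measurable M" for g by measurable
  have "AE x in M. norm (A (c *\<^sub>R f) x) powr q = \<bar>c\<bar> powr q * norm (A f x) powr q"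
    using A_scale[of c f] by eventually_elim (simp add: powr_mult)
  then have "(\<integral>x. norm (A (c *\<^sub>R f) x) powr q \<partial>M) = (\<integral>x. \<bar>c\<bar> powr q * norm (A f x) powr q \<partial>M)"
    using meas by (intro integral_cong_AE) auto
  then show ?thesis using q by (simp add: Lq_norm_def powr_mult powr_powr)
qed

lemma Lq_norm_A_le: "Lq_norm M q (A f) \<le> \<alpha> * norm f"
proof (cases "f = 0")
  case True
  then show ?thesis using Lq_norm_A_scaleR[of 0 0] by simp
next
  case False
  obtain C where C: "\<And>f. Lq_norm M q (A f) \<le> C * norm f" using A_bounded by blast
  have "bdd_above ((\<lambda>f. Lq_norm M q (A f)) ` {f. norm f \<le> 1})"
  proof (rule bdd_aboveI2)
    fix g :: 'h assume "g \<in> {f. norm f \<le> 1}"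
    then have "\<bar>C\<bar> * norm g \<le> \<bar>C\<bar>" by (simp add: mult_left_le)
    moreover have "C * norm g \<le> \<bar>C\<bar> * norm g" by (simp add: mult_right_mono)
    ultimately have "C * norm g \<le> \<bar>C\<bar>" by linarith
    then show "Lq_norm M q (A g) \<le> \<bar>C\<bar>" using C[of g] by linarith
  qed
  then have "Lq_norm M q (A ((1 / norm f) *\<^sub>R f)) \<le> \<alpha>"
    unfolding alpha op_norm_Lq_def by (intro cSUP_upper) auto
  then show ?thesis using False by (simp add: Lq_norm_A_scaleR field_simps)
qed

lemma abs_inner_Astar_le:
  assumes "g \<in> Lq_space M q'"
  shows "\<bar>inner f (Astar g)\<bar> \<le> Lq_norm M q (A f) * Lq_norm M q' g"
  using adjoint[OF assms] Lq_Holder_inner(2)[OF q conjugate(1,2) A_into assms] by simp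

lemma norm_le_if_adjoint_representation:
  assumes g: "g \<in> Lq_space M q'" and d: "\<And>f. inner f d = (\<integral>x. inner (A f x) (g x) \<partial>M)"
  shows "norm d \<le> \<alpha> * Lq_norm M q' g"
proof -
  have "norm d * norm d = (\<integral>x. inner (A d x) (g x) \<partial>M)"
    using d[of d] by (simp add: dot_square_norm power2_eq_square)
  also have "\<dots> \<le> \<bar>\<integral>x. inner (A d x) (g x) \<partial>M\<bar>" by simp
  also have "\<dots> \<le> Lq_norm M q (A d) * Lq_norm M q' g"
    by (rule Lq_Holder_inner(2)[OF q conjugate(1,2) A_into g])
  also have "\<dots> \<le> (\<alpha> * norm d) * Lq_norm M q' g"
    using Lq_norm_A_le[of d] Lq_norm_nonneg[of M q' g] by (rule mult_right_mono)
  finally show ?thesis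
    using alpha_pos Lq_norm_nonneg[of M q' g] by (cases "d = 0") (auto simp: algebra_simps)
qed

lemma norm_Astar_le:
  assumes "g \<in> Lq_space M q'"
  shows "norm (Astar g) \<le> \<alpha> * Lq_norm M q' g"
  using assms by (rule norm_le_if_adjoint_representation) (rule adjoint[OF assms])

lemma norm_Astar_diff_le:
  assumes g1: "g1 \<in> Lq_space M q'" and g2: "g2 \<in> Lq_space M q'"
  shows "norm (Astar g1 - Astar g2) \<le> \<alpha> * Lq_norm M q' (\<lambda>x. g1 x - g2 x)"
proof (rule norm_le_if_adjoint_representation)
  show "(\<lambda>x. g1 x - g2 x) \<in> Lq_space M q'" using Lq_space_diff[OF _ g1 g2] conjugate(1) by simp
  fix f
  show "inner f (Astar g1 - Astar g2) = (\<integral>x. inner (A f x) (g1 x - g2 x) \<partial>M)"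
    using adjoint[OF g1, of f] adjoint[OF g2, of f]
      Lq_Holder_inner(1)[OF q conjugate(1,2) A_into g1] Lq_Holder_inner(1)[OF q conjugate(1,2) A_into g2]
    by (simp add: inner_diff_right)
qed

lemma duality_map_A:
  assumes "0 < Lq_norm M q (A f)"
  shows "duality_map M q (A f) \<in> Lq_space M q'"
    and "Lq_norm M q' (duality_map M q (A f)) = 1"
    and "inner f (Astar (duality_map M q (A f))) = Lq_norm M q (A f)"
  using duality_map_in_Lq_space[OF q q' A_into] Lq_norm_duality_map[OF q q' assms]
    adjoint[OF duality_map_in_Lq_space[OF q q' A_into]] integral_inner_duality_map[OF q assms]
  by simp_all

lemma norm_Astar_duality_map_bounds:
  assumes f: "norm f = 1" and pos: "0 < Lq_norm M q (A f)"
  shows "Lq_norm M q (A f) \<le> norm (Astar (duality_map M q (A f)))"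
    and "norm (Astar (duality_map M q (A f))) \<le> \<alpha>"
  using duality_map_A[OF pos] norm_cauchy_schwarz[of f "Astar (duality_map M q (A f))"] f
    norm_Astar_le[of "duality_map M q (A f)"] by simp_all

lemma Lq_norm_A_normalized_Astar_bounds:
  assumes g: "g \<in> Lq_space M q'" "Lq_norm M q' g = 1" and pos: "Astar g \<noteq> 0"
  shows "norm (Astar g) \<le> Lq_norm M q (A ((1 / norm (Astar g)) *\<^sub>R Astar g))"
    and "Lq_norm M q (A ((1 / norm (Astar g)) *\<^sub>R Astar g)) \<le> \<alpha>"
proof -
  have "(norm (Astar g))\<^sup>2 = inner (Astar g) (Astar g)" by (simp add: dot_square_norm)
  also have "\<dots> \<le> Lq_norm M q (A (Astar g))" using abs_inner_Astar_le[OF g(1), of "Astar g"] g(2) by simp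
  finally show "norm (Astar g) \<le> Lq_norm M q (A ((1 / norm (Astar g)) *\<^sub>R Astar g))"
    using pos by (simp add: Lq_norm_A_scaleR power2_eq_square field_simps)
  show "Lq_norm M q (A ((1 / norm (Astar g)) *\<^sub>R Astar g)) \<le> \<alpha>"
    using Lq_norm_A_le[of "(1 / norm (Astar g)) *\<^sub>R Astar g"] pos by simp
qed

lemma maximizer_dual:
  assumes f: "norm f = 1" "Lq_norm M q (A f) = \<alpha>"
  shows "duality_map M q (A f) \<in> Lq_space M q'"
    and "Lq_norm M q' (duality_map M q (A f)) = 1"
    and "norm (Astar (duality_map M q (A f))) = \<alpha>"
  using duality_map_A[of f] norm_Astar_duality_map_bounds[OF f(1)] f(2) alpha_pos by auto

lemma maximizing_sequence_dual:
  assumes fs: "\<And>n. norm (fs n) = 1" and lim: "(\<lambda>n. Lq_norm M q (A (fs n))) \<longlonglongrightarrow> \<alpha>"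
  shows "\<forall>\<^sub>F n in sequentially. duality_map M q (A (fs n)) \<in> Lq_space M q'
                              \<and> Lq_norm M q' (duality_map M q (A (fs n))) = 1"
    and "(\<lambda>n. norm (Astar (duality_map M q (A (fs n))))) \<longlonglongrightarrow> \<alpha>"
proof -
  have pos: "\<forall>\<^sub>F n in sequentially. 0 < Lq_norm M q (A (fs n))"
    using lim alpha_pos by (rule order_tendstoD(1))
  then show "\<forall>\<^sub>F n in sequentially. duality_map M q (A (fs n)) \<in> Lq_space M q'
                              \<and> Lq_norm M q' (duality_map M q (A (fs n))) = 1"
    by eventually_elim (simp add: duality_map_A)
  have "\<forall>\<^sub>F n in sequentially. Lq_norm M q (A (fs n)) \<le> norm (Astar (duality_map M q (A (fs n))))"
    using pos by eventually_elim (rule norm_Astar_duality_map_bounds(1)[OF fs])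
  moreover have "\<forall>\<^sub>F n in sequentially. norm (Astar (duality_map M q (A (fs n)))) \<le> \<alpha>"
    using pos by eventually_elim (rule norm_Astar_duality_map_bounds(2)[OF fs])
  ultimately show "(\<lambda>n. norm (Astar (duality_map M q (A (fs n))))) \<longlonglongrightarrow> \<alpha>"
    using lim tendsto_const by (rule tendsto_sandwich)
qed

lemma maximizing_sequence_convergent:
  assumes fs: "\<And>n. norm (fs n) = 1" and lim: "(\<lambda>n. Lq_norm M q (A (fs n))) \<longlonglongrightarrow> \<alpha>"
    and g: "g \<in> Lq_space M q'"
    and glim: "(\<lambda>n. Lq_norm M q' (\<lambda>x. duality_map M q (A (fs n)) x - g x)) \<longlonglongrightarrow> 0"
  shows "fs \<longlonglongrightarrow> (1 / norm (Astar g)) *\<^sub>R Astar g"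
proof -
  define J where "J n = duality_map M q (A (fs n))" for n
  have "\<forall>\<^sub>F n in sequentially. norm (Astar (J n) - Astar g) \<le> \<alpha> * Lq_norm M q' (\<lambda>x. J n x - g x)"
    using norm_Astar_diff_le[OF duality_map_in_Lq_space[OF q q' A_into] g] by (simp add: J_def)
  moreover have "(\<lambda>n. \<alpha> * Lq_norm M q' (\<lambda>x. J n x - g x)) \<longlonglongrightarrow> 0"
    using tendsto_mult_right_zero[OF glim] by (simp add: J_def)
  ultimately have "(\<lambda>n. Astar (J n) - Astar g) \<longlonglongrightarrow> 0" by (rule Lim_null_comparison)
  then have Jlim: "(\<lambda>n. Astar (J n)) \<longlonglongrightarrow> Astar g" by (rule LIM_zero_cancel)
  have "norm (Astar g) = \<alpha>"
    using tendsto_norm[OF Jlim] maximizing_sequence_dual(2)[OF fs lim] by (simp add: J_def LIMSEQ_unique)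
  moreover have "\<forall>\<^sub>F n in sequentially. Lq_norm M q (A (fs n)) = inner (fs n) (Astar (J n))"
    using order_tendstoD(1)[OF lim alpha_pos] by eventually_elim (simp add: J_def duality_map_A)
  ultimately have inner_lim: "(\<lambda>n. inner (fs n) (Astar (J n))) \<longlonglongrightarrow> norm (Astar g)"
    using lim by (simp add: tendsto_cong)
  have "Astar g \<noteq> 0" using \<open>norm (Astar g) = \<alpha>\<close> alpha_pos by auto
  then show ?thesis by (rule tendsto_unit_of_inner_tendsto_norm[where x = fs, OF fs Jlim _ inner_lim])
qed

lemma dual_maximizer_primal:
  assumes g: "g \<in> Lq_space M q'" "Lq_norm M q' g = 1" "norm (Astar g) = \<alpha>"
  shows "norm ((1 / norm (Astar g)) *\<^sub>R Astar g) = 1"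
    and "Lq_norm M q (A ((1 / norm (Astar g)) *\<^sub>R Astar g)) = \<alpha>"
proof -
  have "Astar g \<noteq> 0" using g(3) alpha_pos by auto
  then show "norm ((1 / norm (Astar g)) *\<^sub>R Astar g) = 1" by simp
  show "Lq_norm M q (A ((1 / norm (Astar g)) *\<^sub>R Astar g)) = \<alpha>"
    using Lq_norm_A_normalized_Astar_bounds[OF g(1,2) \<open>Astar g \<noteq> 0\<close>] g(3) by simp
qed

lemma dual_maximizing_sequence_primal:
  assumes gs: "\<And>n. gs n \<in> Lq_space M q'" "\<And>n. Lq_norm M q' (gs n) = 1"
    and lim: "(\<lambda>n. norm (Astar (gs n))) \<longlonglongrightarrow> \<alpha>"
  shows "\<forall>\<^sub>F n in sequentially. norm ((1 / norm (Astar (gs n))) *\<^sub>R Astar (gs n)) = 1"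
    and "(\<lambda>n. Lq_norm M q (A ((1 / norm (Astar (gs n))) *\<^sub>R Astar (gs n)))) \<longlonglongrightarrow> \<alpha>"
proof -
  have nz: "\<forall>\<^sub>F n in sequentially. Astar (gs n) \<noteq> 0"
    using order_tendstoD(1)[OF lim alpha_pos] by eventually_elim auto
  then show "\<forall>\<^sub>F n in sequentially. norm ((1 / norm (Astar (gs n))) *\<^sub>R Astar (gs n)) = 1"
    by eventually_elim simp
  have "\<forall>\<^sub>F n in sequentially. norm (Astar (gs n)) \<le> Lq_norm M q (A ((1 / norm (Astar (gs n))) *\<^sub>R Astar (gs n)))"
    using nz by eventually_elim (rule Lq_norm_A_normalized_Astar_bounds(1)[OF gs])
  moreover have "\<forall>\<^sub>F n in sequentially. Lq_norm M q (A ((1 / norm (Astar (gs n))) *\<^sub>R Astar (gs n))) \<le> \<alpha>"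
    using nz by eventually_elim (rule Lq_norm_A_normalized_Astar_bounds(2)[OF gs])
  ultimately show "(\<lambda>n. Lq_norm M q (A ((1 / norm (Astar (gs n))) *\<^sub>R Astar (gs n)))) \<longlonglongrightarrow> \<alpha>"
    using lim tendsto_const by (rule tendsto_sandwich)
qed

lemma dual_maximizing_sequence_convergent:
  assumes gs: "\<And>n. gs n \<in> Lq_space M q'" "\<And>n. Lq_norm M q' (gs n) = 1"
    and lim: "(\<lambda>n. norm (Astar (gs n))) \<longlonglongrightarrow> \<alpha>"
    and flim: "(\<lambda>n. (1 / norm (Astar (gs n))) *\<^sub>R Astar (gs n)) \<longlonglongrightarrow> f"
  shows "(\<lambda>n. Lq_norm M q' (\<lambda>x. gs n x - duality_map M q (A f) x)) \<longlonglongrightarrow> 0"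
proof -
  define fs where "fs n = (1 / norm (Astar (gs n))) *\<^sub>R Astar (gs n)" for n
  have unit: "\<forall>\<^sub>F n in sequentially. norm (fs n) = 1"
    using dual_maximizing_sequence_primal(1)[OF gs lim] by (simp add: fs_def)
  have "norm f = 1"
    using tendsto_norm[OF flim] tendsto_eventually[OF unit] by (simp add: fs_def LIMSEQ_unique)
  have "\<forall>\<^sub>F n in sequentially. inner (fs n) (Astar (gs n)) = norm (Astar (gs n))"
    using unit by eventually_elim (auto simp: fs_def dot_square_norm power2_eq_square)
  then have "(\<lambda>n. inner (fs n) (Astar (gs n))) \<longlonglongrightarrow> \<alpha>" using lim by (simp add: tendsto_cong)
  then have "(\<lambda>n. (inner f (Astar (gs n)) - inner (fs n) (Astar (gs n))) + inner (fs n) (Astar (gs n)))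
      \<longlonglongrightarrow> 0 + \<alpha>"
    using tendsto_inner_diff_zero[OF flim[folded fs_def] lim] by (intro tendsto_add)
  then have mlim: "(\<lambda>n. \<integral>x. inner (A f x) (gs n x) \<partial>M) \<longlonglongrightarrow> \<alpha>"
    using adjoint[OF gs(1)] by simp
  have "(\<integral>x. inner (A f x) (gs n x) \<partial>M) \<le> Lq_norm M q (A f)" for n
    using abs_inner_Astar_le[OF gs(1)[of n], of f] adjoint[OF gs(1)[of n], of f] gs(2) by simp
  then have "\<alpha> \<le> Lq_norm M q (A f)" using mlim by (intro LIMSEQ_le_const2) auto
  then have Af: "Lq_norm M q (A f) = \<alpha>" using Lq_norm_A_le[of f] \<open>norm f = 1\<close> by simp
  show ?thesis
    using Lq_tendsto_duality_map[OF q q' A_into _ gs] mlim alpha_pos by (simp add: Af)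
qed

end

theorem lemma3:
  fixes M :: "'a measure"
    and q q' :: real
    and A :: "'h::{real_inner,complete_space} \<Rightarrow> 'a \<Rightarrow> 'k::{real_inner,real_normed_field}"
    and Astar :: "('a \<Rightarrow> 'k) \<Rightarrow> 'h"
    and \<alpha> :: real
  assumes q: "1 < q" and q': "q' = q / (q - 1)"
    and A_into: "\<And>f. A f \<in> Lq_space M q"
    and A_add: "\<And>f g. AE x in M. A (f + g) x = A f x + A g x"
    and A_scale: "\<And>c f. AE x in M. A (c *\<^sub>R f) x = c *\<^sub>R A f x"
    and A_bounded: "\<exists>C. \<forall>f. Lq_norm M q (A f) \<le> C * norm f"
    and adjoint: "\<And>g f. g \<in> Lq_space M q' \<Longrightarrow> inner f (Astar g) = (\<integral>x. inner (A f x) (g x) \<partial>M)"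
    and alpha: "\<alpha> = op_norm_Lq M q A"
    and alpha_pos: "\<alpha> > 0"
  shows
    \<comment> \<open>(a1)\<close>
    "(\<forall>f. norm f = 1 \<and> Lq_norm M q (A f) = \<alpha> \<longrightarrow>
        (let g = duality_map M q (A f) in
          g \<in> Lq_space M q' \<and> Lq_norm M q' g = 1 \<and> norm (Astar g) = \<alpha>))
    \<and>
    \<comment> \<open>(a2)\<close>
    (\<forall>fs :: nat \<Rightarrow> 'h. (\<forall>n. norm (fs n) = 1) \<and> (\<lambda>n. Lq_norm M q (A (fs n))) \<longlonglongrightarrow> \<alpha> \<longrightarrow>
        (let gs = (\<lambda>n. duality_map M q (A (fs n))) in
          (\<forall>\<^sub>F n in sequentially. gs n \<in> Lq_space M q' \<and> Lq_norm M q' (gs n) = 1)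
          \<and> (\<lambda>n. norm (Astar (gs n))) \<longlonglongrightarrow> \<alpha>
          \<and> (\<forall>g. g \<in> Lq_space M q' \<and> (\<lambda>n. Lq_norm M q' (\<lambda>x. gs n x - g x)) \<longlonglongrightarrow> 0 \<longrightarrow>
                fs \<longlonglongrightarrow> (1 / norm (Astar g)) *\<^sub>R Astar g)))
    \<and>
    \<comment> \<open>(b1)\<close>
    (\<forall>g. g \<in> Lq_space M q' \<and> Lq_norm M q' g = 1 \<and> norm (Astar g) = \<alpha> \<longrightarrow>
        (let f = (1 / norm (Astar g)) *\<^sub>R Astar g in
          norm f = 1 \<and> Lq_norm M q (A f) = \<alpha>))
    \<and>
    \<comment> \<open>(b2)\<close>
    (\<forall>gs :: nat \<Rightarrow> 'a \<Rightarrow> 'k. (\<forall>n. gs n \<in> Lq_space M q' \<and> Lq_norm M q' (gs n) = 1)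
          \<and> (\<lambda>n. norm (Astar (gs n))) \<longlonglongrightarrow> \<alpha> \<longrightarrow>
        (let fs = (\<lambda>n. (1 / norm (Astar (gs n))) *\<^sub>R Astar (gs n)) in
          (\<forall>\<^sub>F n in sequentially. norm (fs n) = 1)
          \<and> (\<lambda>n. Lq_norm M q (A (fs n))) \<longlonglongrightarrow> \<alpha>
          \<and> (\<forall>f. fs \<longlonglongrightarrow> f \<longrightarrow>
                (\<lambda>n. Lq_norm M q' (\<lambda>x. gs n x - duality_map M q (A f) x)) \<longlonglongrightarrow> 0)))"
proof -
  interpret Lq_operator_adjoint M q q' A Astar \<alpha>
    using q q' A_into A_scale A_bounded adjoint alpha alpha_pos by unfold_locales
  show ?thesis
    unfolding Let_def
    apply (intro conjI; intro allI impI)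
    subgoal for f using maximizer_dual by blast
    subgoal for fs using maximizing_sequence_dual[of fs] maximizing_sequence_convergent[of fs] by blast
    subgoal for g using dual_maximizer_primal by blast
    subgoal for gs
      using dual_maximizing_sequence_primal[of gs] dual_maximizing_sequence_convergent[of gs] by blast
    done
qed

end
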